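(* Under the standing assumptions (A1)–(A2) below, for every $\varepsilon>0$ there exist $R_2^{\varepsilon}>0$ and $c_7^{\varepsilon}>0$ such that for all $\mathbf{x}\in\mathbb{R}^n$ with $|\mathbf{x}|>R_2^{\varepsilon}$ one has $\mathbf{F}^{\varepsilon}(\mathbf{x})\neq0$ and \[ \Big\langle \mathbf{F}^{\varepsilon}(\mathbf{x}),\tfrac{\mathbf{x}}{|\mathbf{x}|}\Big\rangle<-c_7^{\varepsilon}\,|\mathbf{F}^{\varepsilon}(\mathbf{x})|. \]
   Context: Write points of $\mathbb{R}^n$ as $\mathbf{x}=(x,\mathbf{y})$ with $x\in\mathbb{R}$, $\mathbf{y}\in\mathbb{R}^{n-1}$; $|\cdot|$ is the Euclidean norm and $\langle\cdot,\cdot\rangle$ the Euclidean inner product. Let $\mathbf{F}^{\pm}:\mathbb{R}^n\to\mathbb{R}^n$ be smooth vector fields and define the piecewise-smooth field $\mathbf{F}(\mathbf{x})=\mathbf{F}^+(\mathbf{x})$ if $x>0$, $\mathbf{F}(\mathbf{x})=\mathbf{F}^-(\mathbf{x})$ if $x<0$. Standing assumptions: (A1) (growth) There exist $1<p<\infty$, $R_1,c_1,c_3,c_5>0$ and $c_2,c_4,c_6\in\mathbb{R}$ with $c_5<c_1$ such that for $|\mathbf{x}|>R_1$: $|\mathbf{F}^-(\mathbf{x})|\ge c_1|\mathbf{x}|^p+c_2$ if $x<0$ and $|\mathbf{F}^+(\mathbf{x})|\ge c_1|\mathbf{x}|^p+c_2$ if $x>0$; $|\partial_x\mathbf{F}^-(\mathbf{x})|\le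 c_3|\mathbf{x}|^p+c_4$ if $x<0$ and $|\partial_x\mathbf{F}^+(\mathbf{x})|\le c_3|\mathbf{x}|^p+c_4$ if $x>0$; and $|\mathbf{F}^+(0,\mathbf{y})-\mathbf{F}^-(0,\mathbf{y})|\le c_5|\mathbf{y}|^p+c_6$. (A2) (asymptotically inward-flowing) There exist $R_2,c_7>0$ such that $|\mathbf{x}|>R_2$ implies $\mathbf{F}^{\pm}(\mathbf{x})\neq0$ and $\langle\mathbf{F}^-(\mathbf{x}),\mathbf{x}/|\mathbf{x}|\rangle<-c_7|\mathbf{F}^-(\mathbf{x})|$ if $x\le0$, $\langle\mathbf{F}^+(\mathbf{x}),\mathbf{x}/|\mathbf{x}|\rangle<-c_7|\mathbf{F}^+(\mathbf{x})|$ if $x\ge0$. Mollification: let $\zeta:\mathbb{R}\to\mathbb{R}$ be a smooth, even, nonnegative function supported in $[-1,1]$ with $\int_{\mathbb{R}}\zeta=1$ (e.g. $\zeta(x)=C\exp(1/(x^2-1))$ for $|x|<1$, $0$ otherwise). For $\varepsilon>0$ set $\zeta_\varepsilon(x)=\zeta(x/\varepsilon)/\varepsilon$, and define the mollified field \[ \mathbf{F}^{\varepsilon}(x,\mathbf{y})=\int_{-\varepsilon}^{\varepsilon}\zeta_\varepsilon(u)\Big(\mathbf{F}^-(x-u,\mathbf{y})\mathbb{1}_{\{u\ge x\}}+\mathbf{F}^+(x-u,\mathbf{y})\mathbb{1}_{\{u\le x\}}\Big)\,du . \] *)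

theory Defs
  imports "HOL-Analysis.Analysis"
begin

fun iter_dderiv :: "'a::real_normed_vector list \<Rightarrow> ('a \<Rightarrow> 'b::real_normed_vector) \<Rightarrow> 'a \<Rightarrow> 'b" where
  "iter_dderiv [] f = f"
| "iter_dderiv (v # vs) f = (\<lambda>x. frechet_derivative (iter_dderiv vs f) (at x) v)"

definition smooth_map :: "('a::real_normed_vector \<Rightarrow> 'b::real_normed_vector) \<Rightarrow> bool" where
  "smooth_map f \<longleftrightarrow> (\<forall>vs x. iter_dderiv vs f differentiable (at x))"

definition partial_x :: "(real \<times> 'a::real_normed_vector \<Rightarrow> 'b::real_normed_vector) \<Rightarrow> real \<times> 'a \<Rightarrow> 'b" where
  "partial_x F p = frechet_derivative F (at p) (1, 0)"

definition mollified :: "(real \<Rightarrow> real) \<Rightarrow> real \<Rightarrow> (real \<times> 'a \<Rightarrow> real \<times> 'a) \<Rightarrow>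
    (real \<times> 'a \<Rightarrow> real \<times> 'a) \<Rightarrow> real \<times> 'a \<Rightarrow> real \<times> ('a::euclidean_space)" where
  "mollified \<zeta> \<epsilon> Fm Fp p = (case p of (x, y) \<Rightarrow>
     integral {-\<epsilon>..\<epsilon>} (\<lambda>u. (\<zeta> (u / \<epsilon>) / \<epsilon>) *\<^sub>R
        ((if u \<ge> x then Fm (x - u, y) else 0) + (if u \<le> x then Fp (x - u, y) else 0))))"

end

theory Submission
  imports Defs
begin

text \<open>At a point \<open>z = (x, y)\<close> the mollified field is an average, with the probability weight
  \<open>\<zeta>\<^sub>\<epsilon>(u)\<close>, of \<open>F\<^sup>-\<close> and \<open>F\<^sup>+\<close> sampled at \<open>w = (x - u, y)\<close>, \<open>|u| \<le> \<epsilon>\<close>. For \<open>|z|\<close> large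
  the unit vectors \<open>w/|w|\<close> and \<open>z/|z|\<close> differ by at most \<open>2\<epsilon>/|z| \<le> c\<^sub>7/2\<close>, and the growth
  bound gives \<open>|F(w)| \<ge> 1\<close>, so every sample satisfies
  \<open>\<langle>F(w), z/|z|\<rangle> + c\<^sub>7/4 |F(w)| \<le> -c\<^sub>7/4\<close>. This cone condition is preserved under averaging,
  since the inner product is linear and the norm of an average is at most the average of the
  norms; it yields the claim with \<open>c\<^sub>7\<^sup>\<epsilon> = c\<^sub>7/4\<close>.\<close>

lemma smooth_map_imp_continuous_on: "smooth_map f \<Longrightarrow> continuous_on S f"
  unfolding smooth_map_def
  by (metis iter_dderiv.simps(1) differentiable_imp_continuous_within continuous_at_imp_continuous_on)

lemma norm_normalized_diff_le:
  fixes z w :: "'b::real_normed_vector"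
  assumes "z \<noteq> 0" "w \<noteq> 0"
  shows "norm (z /\<^sub>R norm z - w /\<^sub>R norm w) \<le> 2 * norm (z - w) / norm z"
proof -
  have "inverse (norm z) - inverse (norm w) = ((norm w - norm z) / norm z) * inverse (norm w)"
    using assms by (simp add: field_simps)
  then have "w /\<^sub>R norm z - w /\<^sub>R norm w = ((norm w - norm z) / norm z) *\<^sub>R (w /\<^sub>R norm w)"
    by (metis scaleR_diff_left scaleR_scaleR)
  then have "norm (w /\<^sub>R norm z - w /\<^sub>R norm w) = \<bar>norm w - norm z\<bar> / norm z"
    using assms by (simp add: abs_mult field_simps)
  also have "\<dots> \<le> norm (z - w) / norm z"
    by (intro divide_right_mono) (auto simp: norm_minus_commute intro: norm_triangle_ineq3)
  finally have w_part: "norm (w /\<^sub>R norm z - w /\<^sub>R norm w) \<le> norm (z - w) / norm z" .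
  have "z /\<^sub>R norm z - w /\<^sub>R norm w = (z - w) /\<^sub>R norm z + (w /\<^sub>R norm z - w /\<^sub>R norm w)"
    by (simp add: algebra_simps)
  then have "norm (z /\<^sub>R norm z - w /\<^sub>R norm w)
      \<le> norm ((z - w) /\<^sub>R norm z) + norm (w /\<^sub>R norm z - w /\<^sub>R norm w)"
    by (metis norm_triangle_ineq)
  also have "\<dots> \<le> norm (z - w) / norm z + norm (z - w) / norm z"
    using w_part by (simp add: divide_inverse_commute)
  finally show ?thesis by simp
qed

lemma inner_normalized_nearby_le:
  fixes F w z :: "'b::real_inner"
  assumes c: "c > 0" and e: "e > 0" and z: "norm z \<ge> 4 * e / c" and wz: "norm (w - z) \<le> e"
    and w: "w \<noteq> 0" and inward: "inner F (w /\<^sub>R norm w) < - c * norm F" and F: "norm F \<ge> 1"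
  shows "inner F (z /\<^sub>R norm z) + c / 4 * norm F \<le> - (c / 4)"
proof -
  have z_pos: "norm z > 0"
    using z e c by (smt (verit) divide_pos_pos)
  have "norm (z /\<^sub>R norm z - w /\<^sub>R norm w) \<le> 2 * norm (z - w) / norm z"
    using z_pos w by (intro norm_normalized_diff_le) auto
  also have "\<dots> \<le> 2 * e / (4 * e / c)"
    using wz z z_pos e c by (intro frac_le) (auto simp: norm_minus_commute)
  also have "\<dots> = c / 2"
    using e c by (simp add: field_simps)
  finally have "inner F (z /\<^sub>R norm z - w /\<^sub>R norm w) \<le> norm F * (c / 2)"
    using Cauchy_Schwarz_ineq2[of F "z /\<^sub>R norm z - w /\<^sub>R norm w"]
    by (smt (verit) mult_left_mono norm_ge_zero)
  moreover have "c * norm F \<ge> c"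
    using mult_left_mono[OF F, of c] c by simp
  ultimately show ?thesis
    using inward by (simp add: inner_diff_right algebra_simps)
qed

lemma has_integral_rescaled_bump:
  fixes \<zeta> :: "real \<Rightarrow> real"
  assumes int: "(\<zeta> has_integral 1) UNIV" and supp: "\<And>t. \<bar>t\<bar> > 1 \<Longrightarrow> \<zeta> t = 0" and e: "e > 0"
  shows "((\<lambda>u. \<zeta> (u / e) / e) has_integral 1) {-e..e}"
proof -
  have "\<zeta> = (\<lambda>t. if t \<in> {-1..1} then \<zeta> t else 0)"
    using supp by (auto simp: fun_eq_iff abs_if)
  with int have "(\<zeta> has_integral 1) {-1..1}"
    by (metis has_integral_restrict_UNIV)
  from has_integral_stretch_real[OF this, of "1 / e"] e
  have "((\<lambda>u. \<zeta> (u / e)) has_integral e) ((\<lambda>t. t * e) ` {-1..1})"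
    by simp
  moreover have "(\<lambda>t. t * e) ` {-1..1} = {-e..e}"
    using image_mult_atLeastAtMost[OF e, of "-1" 1] by (simp add: mult.commute)
  ultimately show ?thesis
    using has_integral_mult_left[of "\<lambda>u. \<zeta> (u / e)" e "{-e..e}" "1 / e"] e by simp
qed

lemma integrable_on_cutoff:
  fixes h :: "real \<Rightarrow> 'b::euclidean_space"
  assumes "continuous_on UNIV h"
  shows "(\<lambda>u. if x \<le> u then h u else 0) integrable_on {a..b}"
    and "(\<lambda>u. if u \<le> x then h u else 0) integrable_on {a..b}"
proof -
  have "h integrable_on ({x..} \<inter> {a..b})" "h integrable_on ({..x} \<inter> {a..b})"
    using assms by (auto intro!: integrable_continuous_interval continuous_on_subset[OF assms])
  then have "(\<lambda>u. if u \<in> {x..} then h u else 0) integrable_on {a..b}"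
      "(\<lambda>u. if u \<in> {..x} then h u else 0) integrable_on {a..b}"
    by (simp_all only: integrable_restrict_Int)
  then show "(\<lambda>u. if x \<le> u then h u else 0) integrable_on {a..b}"
      "(\<lambda>u. if u \<le> x then h u else 0) integrable_on {a..b}"
    by simp_all
qed

lemma inner_norm_integral_le:
  fixes G :: "'n::euclidean_space \<Rightarrow> 'b::euclidean_space"
  assumes G: "G integrable_on S" and g: "g integrable_on S" and \<psi>: "(\<psi> has_integral 1) S"
    and dom: "\<And>u. u \<in> S \<Longrightarrow> norm (G u) \<le> g u"
    and N: "negligible N" and k: "k \<ge> 0"
    and cone: "\<And>u. u \<in> S - N \<Longrightarrow> inner (G u) v + k * g u \<le> - k * \<psi> u"
  shows "inner (integral S G) v + k * norm (integral S G) \<le> - k"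
proof -
  define q where "q u = inner (G u) v + k * g u" for u
  have inner_G: "(\<lambda>u. inner (G u) v) integrable_on S"
    "integral S (\<lambda>u. inner (G u) v) = inner (integral S G) v"
    using integrable_linear[OF G bounded_linear_inner_left[of v]]
      integral_linear[OF G bounded_linear_inner_left[of v]]
    by (simp_all add: o_def)
  have kg: "(\<lambda>u. k * g u) integrable_on S"
    using integrable_on_cmult_left[OF g] by simp
  have q: "q integrable_on S" "integral S q = inner (integral S G) v + k * integral S g"
    unfolding q_def using integrable_add[OF inner_G(1) kg] integral_add[OF inner_G(1) kg] inner_G(2)
    by simp_all
  define q' where "q' u = (if u \<in> N then - k * \<psi> u else q u)" for u
  have "integral S q = integral S q'"
    using N by (intro integral_spike[of N]) (auto simp: q'_def)
  also have "\<dots> \<le> integral S (\<lambda>u. - k * \<psi> u)"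
    using integrable_spike[OF q(1) N, of q'] cone
      has_integral_integrable[OF has_integral_mult_right[OF \<psi>, of "- k"]]
    by (intro integral_le) (auto simp: q'_def q_def)
  also have "\<dots> = - k"
    using integral_unique[OF has_integral_mult_right[OF \<psi>, of "- k"]] by simp
  finally have "inner (integral S G) v + k * integral S g \<le> - k"
    using q(2) by simp
  moreover have "k * norm (integral S G) \<le> k * integral S g"
    using integral_norm_bound_integral[OF G g dom] k by (intro mult_left_mono)
  ultimately show ?thesis by linarith
qed

lemma affine_powr_ge_one:
  fixes a b p r :: real
  assumes a: "a > 0" and p: "p \<ge> 1" and r: "r \<ge> 1 + \<bar>1 - b\<bar> / a"
  shows "a * r powr p + b \<ge> 1"
proof -
  have r1: "r \<ge> 1"
    using r a by (smt (verit) divide_nonneg_pos abs_ge_zero)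
  have "a + \<bar>1 - b\<bar> = a * (1 + \<bar>1 - b\<bar> / a)"
    using a by (simp add: field_simps)
  also have "\<dots> \<le> a * r"
    using r a by (intro mult_left_mono) auto
  also have "\<dots> \<le> a * r powr p"
    using powr_mono[OF p r1] a by simp
  finally show ?thesis
    using a abs_ge_self[of "1 - b"] by linarith
qed

lemma mollified_inward:
  fixes Fm Fp :: "real \<times> 'a::euclidean_space \<Rightarrow> real \<times> 'a" and \<zeta> :: "real \<Rightarrow> real"
  assumes Fm_cont: "continuous_on UNIV Fm" and Fp_cont: "continuous_on UNIV Fp"
    and \<zeta>_cont: "continuous_on UNIV \<zeta>" and \<zeta>_nonneg: "\<And>t. \<zeta> t \<ge> 0"
    and \<zeta>_supp: "\<And>t. \<bar>t\<bar> > 1 \<Longrightarrow> \<zeta> t = 0" and \<zeta>_int: "(\<zeta> has_integral 1) UNIV"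
    and e: "e > 0" and c: "c > 0" and R: "R \<ge> 0"
    and Fm: "\<And>x y. norm (x, y) > R \<Longrightarrow> x < 0 \<Longrightarrow>
      norm (Fm (x, y)) \<ge> 1 \<and> inner (Fm (x, y)) ((x, y) /\<^sub>R norm (x, y)) < - c * norm (Fm (x, y))"
    and Fp: "\<And>x y. norm (x, y) > R \<Longrightarrow> x > 0 \<Longrightarrow>
      norm (Fp (x, y)) \<ge> 1 \<and> inner (Fp (x, y)) ((x, y) /\<^sub>R norm (x, y)) < - c * norm (Fp (x, y))"
    and z: "norm z > R + e + 4 * e / c"
  shows "mollified \<zeta> e Fm Fp z \<noteq> 0 \<and>
    inner (mollified \<zeta> e Fm Fp z) (z /\<^sub>R norm z) < - (c / 4) * norm (mollified \<zeta> e Fm Fp z)"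
proof -
  obtain x y where xy: "z = (x, y)" by (cases z)
  define \<psi> where "\<psi> u = \<zeta> (u / e) / e" for u
  define G where "G u = (if x \<le> u then \<psi> u *\<^sub>R Fm (x - u, y) else 0)
    + (if u \<le> x then \<psi> u *\<^sub>R Fp (x - u, y) else 0)" for u
  define g where "g u = (if x \<le> u then \<psi> u * norm (Fm (x - u, y)) else 0)
    + (if u \<le> x then \<psi> u * norm (Fp (x - u, y)) else 0)" for u
  have margin: "4 * e / c > 0"
    using e c by simp
  have \<psi>_int: "(\<psi> has_integral 1) {-e..e}"
    unfolding \<psi>_def by (rule has_integral_rescaled_bump[OF \<zeta>_int \<zeta>_supp e])
  have \<psi>_nonneg: "\<psi> u \<ge> 0" for u
    using \<zeta>_nonneg e by (simp add: \<psi>_def)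
  have \<psi>_cont: "continuous_on UNIV \<psi>"
    unfolding \<psi>_def using e by (intro continuous_on_compose2[OF \<zeta>_cont] continuous_intros) auto
  have pair_cont: "continuous_on UNIV (\<lambda>u::real. (x - u, y))"
    by (intro continuous_on_Pair continuous_on_diff continuous_on_const continuous_on_id)
  have shift_cont: "continuous_on UNIV (\<lambda>u. F (x - u, y))" if "continuous_on UNIV F" for F
    by (rule continuous_on_compose2[OF that pair_cont]) auto
  have G: "G integrable_on {-e..e}" and g: "g integrable_on {-e..e}"
    unfolding G_def g_def using Fm_cont Fp_cont \<psi>_cont
    by (intro integrable_add integrable_on_cutoff continuous_intros shift_cont; simp)+
  have mollified_eq: "mollified \<zeta> e Fm Fp z = integral {-e..e} G"
    unfolding mollified_def xy G_def \<psi>_def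
    by (auto simp: scaleR_add_right intro!: arg_cong[where f = "integral _"])
  have dom: "norm (G u) \<le> g u" for u
  proof -
    have "norm (G u) \<le> norm (if x \<le> u then \<psi> u *\<^sub>R Fm (x - u, y) else 0)
        + norm (if u \<le> x then \<psi> u *\<^sub>R Fp (x - u, y) else 0)"
      unfolding G_def by (rule norm_triangle_ineq)
    also have "\<dots> = g u"
      using \<psi>_nonneg[of u] by (auto simp: g_def)
    finally show ?thesis .
  qed
  have sample: "inner (\<psi> u *\<^sub>R F) (z /\<^sub>R norm z) + c / 4 * (\<psi> u * norm F) \<le> - (c / 4) * \<psi> u"
    if u: "\<bar>u\<bar> \<le> e" and w: "norm (x - u, y) > R + 4 * e / c"
      and F: "norm F \<ge> 1 \<and> inner F ((x - u, y) /\<^sub>R norm (x - u, y)) < - c * norm F" for u F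
  proof -
    have near: "norm ((x - u, y) - z) \<le> e"
      using u by (simp add: xy norm_Pair)
    have "norm (x - u, y) > 0" and z_big: "norm z \<ge> 4 * e / c"
      using margin w z R e by linarith+
    then have "(x - u, y) \<noteq> 0"
      by auto
    from inner_normalized_nearby_le[OF c e z_big near this conjunct2[OF F] conjunct1[OF F]]
    have "inner F (z /\<^sub>R norm z) + c / 4 * norm F \<le> - (c / 4)" .
    from mult_left_mono[OF this \<psi>_nonneg[of u]] show ?thesis
      by (simp add: algebra_simps)
  qed
  have cone: "inner (G u) (z /\<^sub>R norm z) + c / 4 * g u \<le> - (c / 4) * \<psi> u"
    if "u \<in> {-e..e} - {x}" for u
  proof -
    have u: "\<bar>u\<bar> \<le> e" "u \<noteq> x"
      using that by auto
    have "norm z \<le> norm (x - u, y) + \<bar>u\<bar>"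
      using norm_triangle_ineq[of "(x - u, y)" "(u, 0)"] by (simp add: xy)
    then have w: "norm (x - u, y) > R + 4 * e / c"
      using u z by linarith
    then have wR: "norm (x - u, y) > R"
      using margin by linarith
    show ?thesis
    proof (cases "x < u")
      case True
      then have "G u = \<psi> u *\<^sub>R Fm (x - u, y)" "g u = \<psi> u * norm (Fm (x - u, y))"
        by (simp_all add: G_def g_def)
      then show ?thesis
        using True sample[OF u(1) w Fm[OF wR]] by simp
    next
      case False
      with u(2) have "u < x"
        by simp
      then have "G u = \<psi> u *\<^sub>R Fp (x - u, y)" "g u = \<psi> u * norm (Fp (x - u, y))"
        by (simp_all add: G_def g_def)
      then show ?thesis
        using \<open>u < x\<close> sample[OF u(1) w Fp[OF wR]] by simp
    qed
  qed
  text \<open>At \<open>u = x\<close> both one-sided fields enter the integrand; this single point is negligible.\<close>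
  have "inner (integral {-e..e} G) (z /\<^sub>R norm z) + c / 4 * norm (integral {-e..e} G) \<le> - (c / 4)"
    using c by (intro inner_norm_integral_le[OF G g \<psi>_int dom negligible_sing _ cone]) auto
  then show ?thesis
    using c by (auto simp: mollified_eq)
qed

theorem lemma3p2:
  fixes Fm Fp :: "real \<times> 'a::euclidean_space \<Rightarrow> real \<times> 'a"
    and \<zeta> :: "real \<Rightarrow> real"
    and p R1 c1 c2 c3 c4 c5 c6 R2 c7 :: real
  assumes smooth_m: "smooth_map Fm" and smooth_p: "smooth_map Fp"
    \<comment> \<open>(A1) growth\<close>
    and p: "1 < p" and R1: "R1 > 0" and c1: "c1 > 0" and c3: "c3 > 0" and c5: "c5 > 0"
    and c51: "c5 < c1"
    and grow_m: "\<And>x y. norm (x, y) > R1 \<Longrightarrow> x < 0 \<Longrightarrow> norm (Fm (x, y)) \<ge> c1 * norm (x, y) powr p + c2"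
    and grow_p: "\<And>x y. norm (x, y) > R1 \<Longrightarrow> x > 0 \<Longrightarrow> norm (Fp (x, y)) \<ge> c1 * norm (x, y) powr p + c2"
    and dx_m: "\<And>x y. norm (x, y) > R1 \<Longrightarrow> x < 0 \<Longrightarrow> norm (partial_x Fm (x, y)) \<le> c3 * norm (x, y) powr p + c4"
    and dx_p: "\<And>x y. norm (x, y) > R1 \<Longrightarrow> x > 0 \<Longrightarrow> norm (partial_x Fp (x, y)) \<le> c3 * norm (x, y) powr p + c4"
    and jump: "\<And>y. norm ((0::real), y) > R1 \<Longrightarrow> norm (Fp (0, y) - Fm (0, y)) \<le> c5 * norm y powr p + c6"
    \<comment> \<open>(A2) asymptotically inward-flowing\<close>
    and R2: "R2 > 0" and c7: "c7 > 0"
    and nz: "\<And>z. norm z > R2 \<Longrightarrow> Fm z \<noteq> 0 \<and> Fp z \<noteq> 0"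
    and inw_m: "\<And>x y. norm (x, y) > R2 \<Longrightarrow> x \<le> 0 \<Longrightarrow>
       inner (Fm (x, y)) ((x, y) /\<^sub>R norm (x, y)) < - c7 * norm (Fm (x, y))"
    and inw_p: "\<And>x y. norm (x, y) > R2 \<Longrightarrow> x \<ge> 0 \<Longrightarrow>
       inner (Fp (x, y)) ((x, y) /\<^sub>R norm (x, y)) < - c7 * norm (Fp (x, y))"
    \<comment> \<open>mollifier\<close>
    and zeta_smooth: "smooth_map \<zeta>"
    and zeta_even: "\<And>t. \<zeta> (- t) = \<zeta> t"
    and zeta_nonneg: "\<And>t. \<zeta> t \<ge> 0"
    and zeta_supp: "\<And>t. \<bar>t\<bar> > 1 \<Longrightarrow> \<zeta> t = 0"
    and zeta_int: "(\<zeta> has_integral 1) UNIV"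
  shows "\<forall>\<epsilon>>0. \<exists>R2e>0. \<exists>c7e>0. \<forall>z. norm z > R2e \<longrightarrow>
           mollified \<zeta> \<epsilon> Fm Fp z \<noteq> 0 \<and>
           inner (mollified \<zeta> \<epsilon> Fm Fp z) (z /\<^sub>R norm z) < - c7e * norm (mollified \<zeta> \<epsilon> Fm Fp z)"
proof (intro allI impI)
  fix e :: real
  assume e: "e > 0"
  define R where "R = R1 + R2 + 1 + \<bar>1 - c2\<bar> / c1"
  have "\<bar>1 - c2\<bar> / c1 \<ge> 0"
    using c1 by simp
  then have R_nonneg: "R \<ge> 0"
    using R1 R2 by (simp add: R_def)
  have big: "norm w > R1" "norm w > R2" "c1 * norm w powr p + c2 \<ge> 1"
    if "norm w > R" for w :: "real \<times> 'a"
    using that R1 R2 \<open>\<bar>1 - c2\<bar> / c1 \<ge> 0\<close> p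
      affine_powr_ge_one[OF c1, where r = "norm w" and b = c2 and p = p]
    by (simp_all add: R_def)
  have Fm: "norm (Fm (x, y)) \<ge> 1 \<and> inner (Fm (x, y)) ((x, y) /\<^sub>R norm (x, y)) < - c7 * norm (Fm (x, y))"
    if "norm (x, y) > R" "x < 0" for x y
    using that big[OF that(1)] grow_m[of x y] inw_m[of x y] by fastforce
  have Fp: "norm (Fp (x, y)) \<ge> 1 \<and> inner (Fp (x, y)) ((x, y) /\<^sub>R norm (x, y)) < - c7 * norm (Fp (x, y))"
    if "norm (x, y) > R" "x > 0" for x y
    using that big[OF that(1)] grow_p[of x y] inw_p[of x y] by fastforce
  have "4 * e / c7 > 0"
    using e c7 by simp
  then have "R + e + 4 * e / c7 > 0" "c7 / 4 > 0"
    using R_nonneg e c7 by linarith+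
  moreover have "\<forall>z. norm z > R + e + 4 * e / c7 \<longrightarrow> mollified \<zeta> e Fm Fp z \<noteq> 0 \<and>
      inner (mollified \<zeta> e Fm Fp z) (z /\<^sub>R norm z) < - (c7 / 4) * norm (mollified \<zeta> e Fm Fp z)"
    using smooth_map_imp_continuous_on[OF smooth_m] smooth_map_imp_continuous_on[OF smooth_p]
      smooth_map_imp_continuous_on[OF zeta_smooth] zeta_nonneg zeta_supp zeta_int e c7 R_nonneg Fm Fp
    by (intro allI impI mollified_inward) auto
  ultimately show "\<exists>R2e>0. \<exists>c7e>0. \<forall>z. norm z > R2e \<longrightarrow> mollified \<zeta> e Fm Fp z \<noteq> 0 \<and>
      inner (mollified \<zeta> e Fm Fp z) (z /\<^sub>R norm z) < - c7e * norm (mollified \<zeta> e Fm Fp z)"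
    by blast
qed

end
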